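(* Let $p,q$ be positive integers with $2\le p/q<4$, and let $f,g$ be two $(p,q)$-colourings of a graph $G$ where $g$ is obtained from $f$ by recolouring a vertex set $X$ by $\alpha$, i.e. $\alpha\in\{1,\dots,p-1\}$, $g(v)\equiv f(v)+\alpha\pmod p$ for $v\in X$ and $g(v)=f(v)$ for $v\notin X$. Then either there is a sequence of $(p,q)$-colourings $f=f_0,f_1,\dots,f_\alpha=g$ in which each $f_{i+1}$ is obtained from $f_i$ by recolouring $X$ by $1$ (adding $1$ modulo $p$ to the colour of every vertex of $X$), or there is a sequence of $(p,q)$-colourings $f=f_0,f_1,\dots,f_{p-\alpha}=g$ in which each $f_{i+1}$ is obtained from $f_i$ by recolouring $X$ by $-1$ (subtracting $1$ modulo $p$ from the colour of every vertex of $X$).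
   Context: A $(p,q)$-colouring of $G$ is a map $f:V(G)\to\{0,\dots,p-1\}$ with $q\le|f(u)-f(v)|\le p-q$ for every edge $uv$. *)

theory Defs
  imports Main
begin

definition simple_graph :: "'a set \<Rightarrow> ('a \<Rightarrow> 'a \<Rightarrow> bool) \<Rightarrow> bool" where
  "simple_graph V E \<longleftrightarrow> finite V \<and> (\<forall>u v. E u v \<longrightarrow> u \<in> V \<and> v \<in> V \<and> u \<noteq> v \<and> E v u)"

definition pq_colouring :: "nat \<Rightarrow> nat \<Rightarrow> 'a set \<Rightarrow> ('a \<Rightarrow> 'a \<Rightarrow> bool) \<Rightarrow> ('a \<Rightarrow> nat) \<Rightarrow> bool" where
  "pq_colouring p q V E f \<longleftrightarrow>
     (\<forall>v\<in>V. f v < p) \<and>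
     (\<forall>u v. E u v \<longrightarrow> int q \<le> \<bar>int (f u) - int (f v)\<bar> \<and> \<bar>int (f u) - int (f v)\<bar> \<le> int p - int q)"

definition recolour :: "nat \<Rightarrow> 'a set \<Rightarrow> 'a set \<Rightarrow> int \<Rightarrow> ('a \<Rightarrow> nat) \<Rightarrow> ('a \<Rightarrow> nat) \<Rightarrow> bool" where
  "recolour p V X a f g \<longleftrightarrow>
     (\<forall>v\<in>V. (v \<in> X \<longrightarrow> int (g v) = (int (f v) + a) mod int p) \<and> (v \<notin> X \<longrightarrow> g v = f v))"

end

theory Submission
  imports Defs
begin

text \<open>An edge is admissible iff the difference of its colours, taken modulo \<open>p\<close>, lies in
  \<open>[q, p - q]\<close>. Recolouring \<open>X\<close> by \<open>t\<close> adds \<open>t\<close> to this difference on the edges leaving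
  \<open>X\<close> and leaves all other edges unchanged. Both ends of the move from \<open>c\<close> to \<open>c + \<alpha>\<close> in
  unit steps are admissible, so an intermediate step can only be inadmissible if the move passes
  over the whole forbidden arc \<open>(p - q, p + q)\<close>, which needs \<open>\<alpha> \<ge> 2 q\<close>. Hence recolouring
  by \<open>1\<close> works when \<open>\<alpha> < 2 q\<close>. Otherwise \<open>p - \<alpha> < 2 q\<close> because \<open>p < 4 q\<close>, and the same
  argument applies to the move from \<open>c\<close> down to \<open>c - (p - \<alpha>)\<close>, which is congruent to
  \<open>c + \<alpha>\<close>, so recolouring by \<open>-1\<close> works.\<close>

definition cyclic_sep :: "int \<Rightarrow> int \<Rightarrow> int \<Rightarrow> bool" where
  "cyclic_sep p q x \<longleftrightarrow> q \<le> x mod p \<and> x mod p \<le> p - q"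

lemma cyclic_sep_mod_cong:
  "x mod p = y mod p \<Longrightarrow> cyclic_sep p q x \<longleftrightarrow> cyclic_sep p q y"
  by (simp add: cyclic_sep_def)

lemma cyclic_sep_uminus:
  assumes "0 < q" "cyclic_sep p q x"
  shows "cyclic_sep p q (- x)"
proof -
  have "x mod p \<noteq> 0" using assms by (auto simp: cyclic_sep_def)
  then have "(- x) mod p = p - x mod p" by (simp add: zmod_zminus1_eq_if)
  then show ?thesis using assms(2) by (simp add: cyclic_sep_def)
qed

lemma cyclic_sep_iff_bounds:
  "0 \<le> x \<Longrightarrow> x < p \<Longrightarrow> cyclic_sep p q x \<longleftrightarrow> q \<le> x \<and> x \<le> p - q"
  by (simp add: cyclic_sep_def)

lemma abs_diff_bounds_iff_cyclic_sep:
  fixes a b p q :: int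
  assumes "0 \<le> a" "a < p" "0 \<le> b" "b < p"
  shows "q \<le> \<bar>a - b\<bar> \<and> \<bar>a - b\<bar> \<le> p - q \<longleftrightarrow> cyclic_sep p q (a - b)"
proof (cases "b \<le> a")
  case True
  then show ?thesis using assms by (simp add: cyclic_sep_iff_bounds)
next
  case False
  have "cyclic_sep p q (a - b) \<longleftrightarrow> cyclic_sep p q (a - b + p)"
    by (rule cyclic_sep_mod_cong) simp
  then show ?thesis using assms False by (simp add: cyclic_sep_iff_bounds) linarith
qed

lemma pq_colouring_iff_cyclic_sep:
  assumes "simple_graph V E"
  shows "pq_colouring p q V E f \<longleftrightarrow>
    (\<forall>v\<in>V. f v < p) \<and> (\<forall>u v. E u v \<longrightarrow> cyclic_sep (int p) (int q) (int (f u) - int (f v)))"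
proof -
  have "int q \<le> \<bar>int (f u) - int (f v)\<bar> \<and> \<bar>int (f u) - int (f v)\<bar> \<le> int p - int q
      \<longleftrightarrow> cyclic_sep (int p) (int q) (int (f u) - int (f v))"
    if "\<forall>v\<in>V. f v < p" "E u v" for u v
  proof -
    have "u \<in> V" "v \<in> V" using assms \<open>E u v\<close> by (auto simp: simple_graph_def)
    then show ?thesis using that by (intro abs_diff_bounds_iff_cyclic_sep) auto
  qed
  then show ?thesis unfolding pq_colouring_def by blast
qed

lemma cyclic_sep_intermediate:
  assumes "0 < p" "0 < q" "cyclic_sep p q c" "cyclic_sep p q (c + a)" "a < 2 * q"
    and "0 \<le> t" "t \<le> a"
  shows "cyclic_sep p q (c + t)"
proof -
  define r where "r = c mod p"
  have r: "0 \<le> r" "r < p" "q \<le> r" "r \<le> p - q"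
    using assms(1,3) by (auto simp: r_def cyclic_sep_def)
  have shift: "cyclic_sep p q (r + s) \<longleftrightarrow> cyclic_sep p q (c + s)" for s
    by (rule cyclic_sep_mod_cong) (simp add: r_def mod_add_left_eq)
  have no_wrap: "r + a < p"
  proof (rule ccontr)
    assume "\<not> r + a < p"
    then have "cyclic_sep p q (r + a) \<longleftrightarrow> cyclic_sep p q (r + a - p)"
      by (intro cyclic_sep_mod_cong) (simp add: mod_diff_right_eq[symmetric])
    then show False using assms(4,5) r \<open>\<not> r + a < p\<close> shift
      by (simp add: cyclic_sep_iff_bounds)
  qed
  then have "r + a \<le> p - q" using assms(4,6,7) r shift[of a] by (simp add: cyclic_sep_iff_bounds)
  then have "cyclic_sep p q (r + t)"
    using assms(2,6,7) r by (subst cyclic_sep_iff_bounds) auto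
  then show ?thesis using shift by blast
qed

definition shift_on :: "nat \<Rightarrow> 'a set \<Rightarrow> int \<Rightarrow> ('a \<Rightarrow> nat) \<Rightarrow> 'a \<Rightarrow> nat" where
  "shift_on p X t f v = (if v \<in> X then nat ((int (f v) + t) mod int p) else f v)"

lemma shift_on_0: "f v < p \<Longrightarrow> shift_on p X 0 f v = f v"
  by (simp add: shift_on_def)

lemma shift_on_mod_cong:
  "s mod int p = t mod int p \<Longrightarrow> shift_on p X s f = shift_on p X t f"
  unfolding shift_on_def by (metis mod_add_right_eq)

lemma shift_on_shift_on:
  "0 < p \<Longrightarrow> shift_on p X s (shift_on p X t f) = shift_on p X (t + s) f"
  by (auto simp: shift_on_def fun_eq_iff mod_add_left_eq add.assoc)

lemma recolour_shift_on: "0 < p \<Longrightarrow> recolour p V X t f (shift_on p X t f)"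
  by (simp add: recolour_def shift_on_def)

lemma recolour_imp_eq_shift_on:
  "recolour p V X t f g \<Longrightarrow> v \<in> V \<Longrightarrow> g v = shift_on p X t f v"
  unfolding recolour_def shift_on_def by (metis nat_int)

lemma diff_shift_on_mod:
  assumes "0 < p"
  shows "(int (shift_on p X t f u) - int (shift_on p X t f v)) mod int p
     = (int (f u) - int (f v) + ((if u \<in> X then t else 0) - (if v \<in> X then t else 0))) mod int p"
  using assms by (auto simp: shift_on_def mod_diff_left_eq mod_diff_right_eq algebra_simps)

lemma pq_colouring_shift_on:
  assumes G: "simple_graph V E" and "0 < p" "0 < q" and f: "pq_colouring p q V E f"
    and cross: "\<And>u v. E u v \<Longrightarrow> u \<in> X \<Longrightarrow> v \<notin> X \<Longrightarrow>
      cyclic_sep (int p) (int q) (int (f u) - int (f v) + t)"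
  shows "pq_colouring p q V E (shift_on p X t f)"
proof -
  let ?sep = "cyclic_sep (int p) (int q)"
  have f_edge: "?sep (int (f u) - int (f v))" if "E u v" for u v
    using f that by (simp add: pq_colouring_iff_cyclic_sep[OF G])
  have "?sep (int (shift_on p X t f u) - int (shift_on p X t f v))" if "E u v" for u v
  proof -
    have "?sep (int (shift_on p X t f u) - int (shift_on p X t f v)) \<longleftrightarrow>
        ?sep (int (f u) - int (f v) + ((if u \<in> X then t else 0) - (if v \<in> X then t else 0)))"
      by (rule cyclic_sep_mod_cong) (rule diff_shift_on_mod[OF \<open>0 < p\<close>])
    moreover have "?sep (int (f u) - int (f v) - t)" if "u \<notin> X" "v \<in> X"
    proof -
      have "E v u" using G \<open>E u v\<close> by (simp add: simple_graph_def)
      then have "?sep (- (int (f v) - int (f u) + t))"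
        using cross that \<open>0 < q\<close> by (intro cyclic_sep_uminus) auto
      then show ?thesis by (simp add: algebra_simps)
    qed
    ultimately show ?thesis using f_edge[OF \<open>E u v\<close>] cross[OF \<open>E u v\<close>] by auto
  qed
  moreover have "\<forall>v\<in>V. shift_on p X t f v < p"
    using f \<open>0 < p\<close> by (auto simp: shift_on_def pq_colouring_def nat_less_iff)
  ultimately show ?thesis by (simp add: pq_colouring_iff_cyclic_sep[OF G])
qed

lemma cyclic_sep_cross_edge:
  assumes G: "simple_graph V E" and "0 < p"
    and f: "pq_colouring p q V E f" and g: "pq_colouring p q V E g"
    and fg: "recolour p V X a f g" and "E u v" "u \<in> X" "v \<notin> X"
  shows "cyclic_sep (int p) (int q) (int (f u) - int (f v) + a)"
proof -
  have "u \<in> V" "v \<in> V" using G \<open>E u v\<close> by (auto simp: simple_graph_def)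
  then have "g u = shift_on p X a f u" "g v = shift_on p X a f v"
    using recolour_imp_eq_shift_on[OF fg] by auto
  then have "(int (g u) - int (g v)) mod int p = (int (f u) - int (f v) + a) mod int p"
    using diff_shift_on_mod[OF \<open>0 < p\<close>, of X a f u v] \<open>u \<in> X\<close> \<open>v \<notin> X\<close> by simp
  moreover have "cyclic_sep (int p) (int q) (int (g u) - int (g v))"
    using g \<open>E u v\<close> by (simp add: pq_colouring_iff_cyclic_sep[OF G])
  ultimately show ?thesis using cyclic_sep_mod_cong by blast
qed

lemma recolouring_path_shift_on:
  assumes "0 < p" and "\<forall>v\<in>V. f v < p" and "recolour p V X a f g"
    and "(s * int n) mod int p = a mod int p"
    and "\<forall>i\<le>n. pq_colouring p q V E (shift_on p X (s * int i) f)"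
  shows "\<exists>fs. (\<forall>v\<in>V. fs 0 v = f v) \<and> (\<forall>v\<in>V. fs n v = g v) \<and>
      (\<forall>i\<le>n. pq_colouring p q V E (fs i)) \<and> (\<forall>i<n. recolour p V X s (fs i) (fs (Suc i)))"
proof (intro exI conjI)
  let ?fs = "\<lambda>i. shift_on p X (s * int i) f"
  show "\<forall>v\<in>V. ?fs 0 v = f v" using assms(2) by (simp add: shift_on_0)
  show "\<forall>v\<in>V. ?fs n v = g v"
    using recolour_imp_eq_shift_on[OF assms(3)] shift_on_mod_cong[OF assms(4), of X f] by simp
  show "\<forall>i\<le>n. pq_colouring p q V E (?fs i)" by (fact assms(5))
  have "?fs (Suc i) = shift_on p X s (?fs i)" for i
    by (simp add: shift_on_shift_on[OF assms(1)] algebra_simps)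
  then show "\<forall>i<n. recolour p V X s (?fs i) (?fs (Suc i))"
    by (metis recolour_shift_on[OF assms(1)])
qed

lemma pq_colouring_shift_on_forward:
  assumes G: "simple_graph V E" and "0 < p" "0 < q"
    and f: "pq_colouring p q V E f" and g: "pq_colouring p q V E g"
    and fg: "recolour p V X (int a) f g" and "a < 2 * q" "i \<le> a"
  shows "pq_colouring p q V E (shift_on p X (int i) f)"
proof (rule pq_colouring_shift_on[OF G \<open>0 < p\<close> \<open>0 < q\<close> f])
  fix u v assume uv: "E u v" "u \<in> X" "v \<notin> X"
  have "cyclic_sep (int p) (int q) (int (f u) - int (f v))"
    using f uv by (simp add: pq_colouring_iff_cyclic_sep[OF G])
  moreover have "cyclic_sep (int p) (int q) (int (f u) - int (f v) + int a)"
    using cyclic_sep_cross_edge[OF G \<open>0 < p\<close> f g fg uv] .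
  ultimately show "cyclic_sep (int p) (int q) (int (f u) - int (f v) + int i)"
    using cyclic_sep_intermediate[of "int p" "int q" _ "int a" "int i"] assms(2,3,7,8) by simp
qed

lemma pq_colouring_shift_on_backward:
  assumes G: "simple_graph V E" and "0 < p" "0 < q"
    and f: "pq_colouring p q V E f" and g: "pq_colouring p q V E g"
    and fg: "recolour p V X (int a) f g" and "2 * q \<le> a" "a \<le> p" "p < 4 * q" "i \<le> p - a"
  shows "pq_colouring p q V E (shift_on p X (- int i) f)"
proof (rule pq_colouring_shift_on[OF G \<open>0 < p\<close> \<open>0 < q\<close> f])
  fix u v assume uv: "E u v" "u \<in> X" "v \<notin> X"
  define c where "c = int (f u) - int (f v) - (int p - int a)"
  have "cyclic_sep (int p) (int q) (int (f u) - int (f v) + int a)"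
    using cyclic_sep_cross_edge[OF G \<open>0 < p\<close> f g fg uv] .
  moreover have "(int (f u) - int (f v) + int a) mod int p = c mod int p"
  proof -
    have "int (f u) - int (f v) + int a = c + int p" by (simp add: c_def)
    then show ?thesis by simp
  qed
  ultimately have "cyclic_sep (int p) (int q) c" using cyclic_sep_mod_cong by blast
  moreover have "cyclic_sep (int p) (int q) (c + (int p - int a))"
    using f uv by (simp add: c_def pq_colouring_iff_cyclic_sep[OF G])
  ultimately have "cyclic_sep (int p) (int q) (c + (int p - int a - int i))"
    using cyclic_sep_intermediate[of "int p" "int q" c "int p - int a" "int p - int a - int i"]
      assms(2,3,7-10) by simp
  then show "cyclic_sep (int p) (int q) (int (f u) - int (f v) + - int i)"
    by (simp add: c_def algebra_simps)
qed

theorem proposition2p6: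
  fixes p q \<alpha> :: nat and V X :: "'a set" and E :: "'a \<Rightarrow> 'a \<Rightarrow> bool" and f g :: "'a \<Rightarrow> nat"
  assumes "simple_graph V E"
    and "0 < q" and "2 * q \<le> p" and "p < 4 * q"
    and "pq_colouring p q V E f" and "pq_colouring p q V E g"
    and "X \<subseteq> V"
    and "1 \<le> \<alpha>" and "\<alpha> \<le> p - 1"
    and "recolour p V X (int \<alpha>) f g"
  shows "(\<exists>fs :: nat \<Rightarrow> 'a \<Rightarrow> nat.
            (\<forall>v\<in>V. fs 0 v = f v) \<and> (\<forall>v\<in>V. fs \<alpha> v = g v) \<and>
            (\<forall>i\<le>\<alpha>. pq_colouring p q V E (fs i)) \<and>
            (\<forall>i<\<alpha>. recolour p V X 1 (fs i) (fs (Suc i))))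
       \<or> (\<exists>fs :: nat \<Rightarrow> 'a \<Rightarrow> nat.
            (\<forall>v\<in>V. fs 0 v = f v) \<and> (\<forall>v\<in>V. fs (p - \<alpha>) v = g v) \<and>
            (\<forall>i\<le>p - \<alpha>. pq_colouring p q V E (fs i)) \<and>
            (\<forall>i<p - \<alpha>. recolour p V X (-1) (fs i) (fs (Suc i))))"
proof -
  note G = assms(1) and f = assms(5) and g = assms(6) and fg = assms(10)
  have "0 < p" using assms(2,3) by linarith
  have f_bound: "\<forall>v\<in>V. f v < p" using f by (simp add: pq_colouring_def)
  show ?thesis
  proof (cases "\<alpha> < 2 * q")
    case True
    then have "\<forall>i\<le>\<alpha>. pq_colouring p q V E (shift_on p X (1 * int i) f)"
      using pq_colouring_shift_on_forward[OF G \<open>0 < p\<close> \<open>0 < q\<close> f g fg] by simp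
    then show ?thesis
      using recolouring_path_shift_on[OF \<open>0 < p\<close> f_bound fg, of 1 \<alpha>] by auto
  next
    case False
    then have "\<forall>i\<le>p - \<alpha>. pq_colouring p q V E (shift_on p X (- 1 * int i) f)"
      using pq_colouring_shift_on_backward[OF G \<open>0 < p\<close> \<open>0 < q\<close> f g fg] assms(4,9) by simp
    moreover have "(- 1 * int (p - \<alpha>)) mod int p = int \<alpha> mod int p"
      using assms(9) by (simp add: of_nat_diff mod_diff_left_eq[symmetric])
    ultimately show ?thesis
      using recolouring_path_shift_on[OF \<open>0 < p\<close> f_bound fg, of "- 1" "p - \<alpha>"] by auto
  qed
qed

end
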